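(* Let $q=2^m$ with $m\ge 3$. Consider the map $\tau$ sending a pair of integers $(q_1,q_2)$ with $q_1,q_2,q_1+q_2,q_1-q_2$ all $\not\equiv0\pmod q$ to $\tau(q_1,q_2)=\big(\psi(q_1,q_2),\alpha^{(1)}(q_1,q_2),\dots,\alpha^{(m-1)}(q_1,q_2)\big)$. Then $\tau$ takes at most $(m-1)^2$ distinct values.
   Context: Let $\gamma=e^{2\pi i/q}$. Let $A$ be the set of odd residues in $\{1,\dots,q-1\}$, and for $1\le j\le m-1$ let $B_j=\{x\in\{1,\dots,q-1\}: 2^j\mid x,\ 2^{j+1}\nmid x\}$. Define $\psi(q_1,q_2)(z)=\sum_{l\in A}\prod_{i=1}^{2}(z-\gamma^{q_il})(z-\gamma^{-q_il})$ and $\alpha^{(j)}(q_1,q_2)(z)=\sum_{l\in B_j}\prod_{i=1}^{2}(z-\gamma^{q_il})(z-\gamma^{-q_il})$. *)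

theory Defs
  imports Complex_Main "HOL-Computational_Algebra.Polynomial"
begin

definition gam :: "nat \<Rightarrow> complex" where
  "gam q = exp (2 * of_real pi * \<i> / of_nat q)"

definition oddRes :: "nat \<Rightarrow> nat set" where
  "oddRes q = {l \<in> {1..q-1}. odd l}"

definition Bset :: "nat \<Rightarrow> nat \<Rightarrow> nat set" where
  "Bset q j = {x \<in> {1..q-1}. 2^j dvd x \<and> \<not> 2^(j+1) dvd x}"

definition factorPoly :: "nat \<Rightarrow> int \<Rightarrow> int \<Rightarrow> nat \<Rightarrow> complex poly" where
  "factorPoly q q1 q2 l =
    
     ([:- (gam q powi (q1 * int l)), 1:] * [:- (gam q powi (- q1 * int l)), 1:]) *
     ([:- (gam q powi (q2 * int l)), 1:] * [:- (gam q powi (- q2 * int l)), 1:])"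

definition psiPoly :: "nat \<Rightarrow> int \<Rightarrow> int \<Rightarrow> complex poly" where
  "psiPoly q q1 q2 = (\<Sum>l\<in>oddRes q. factorPoly q q1 q2 l)"

definition alphaPoly :: "nat \<Rightarrow> nat \<Rightarrow> int \<Rightarrow> int \<Rightarrow> complex poly" where
  "alphaPoly q j q1 q2 = (\<Sum>l\<in>Bset q j. factorPoly q q1 q2 l)"

definition tau :: "nat \<Rightarrow> int \<Rightarrow> int \<Rightarrow> complex poly list" where
  "tau m q1 q2 = psiPoly (2^m) q1 q2 # map (\<lambda>j. alphaPoly (2^m) j q1 q2) [1..<m]"

end

theory Submission
  imports Defs "HOL-Number_Theory.Cong"
begin

(* Write q = 2^m, let v2 be the 2-adic valuation, and for a set S of residues let
   root_sum S n be the sum of gamma^(n l) over l in S.  Expanding the product of the four linear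
   factors shows that the sum over S of factorPoly q1 q2 l is a fixed combination of three
   polynomials whose coefficients are card S and the root sums at +-q1, +-q2, +-(q1+q2),
   +-(q1-q2).  The sets A and B_j are stable under multiplication by odd residues, and such a
   permutation of S does not change a root sum; hence root_sum S n depends only on v2 n, and
   tau(q1,q2) depends only on the "valuation key": the unordered pairs {v2 q1, v2 q2} and
   {v2 (q1+q2), v2 (q1-q2)}.  By the ultrametric behaviour of v2 these four valuations form a
   rigid pattern, which is encoded injectively by a pair in {1..m-1} x {1..m-1}; for admissible
   (q1,q2) all valuations are below m.  So the key takes at most (m-1)^2 values, and so does tau. *)

abbreviation v2 :: "int \<Rightarrow> nat" where "v2 n \<equiv> multiplicity (2::int) n"

lemma v2_decompose:
  assumes "n \<noteq> 0" obtains u where "odd u" "n = 2 ^ v2 n * u"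
  using multiplicity_decompose'[of n 2] assms that by auto

lemma v2_mult_pow2: assumes "t \<noteq> 0" shows "v2 (2 ^ k * t) = k + v2 t"
  using assms by (simp add: prime_elem_multiplicity_mult_distrib prime_elem_multiplicity_power_distrib)

lemma v2_uminus: "v2 (- n) = v2 n"
  by (metis abs_minus_cancel multiplicity_normalize_right normalize_int_def)

lemma v2_less_of_not_dvd: assumes "\<not> (2::int) ^ m dvd n" shows "v2 n < m"
  using assms multiplicity_dvd'[of m "2::int" n] by force

lemma v2_add_diff_unequal:
  assumes "v2 x \<noteq> v2 y" "x \<noteq> 0" "y \<noteq> 0"
  shows "v2 (x + y) = min (v2 x) (v2 y)" "v2 (x - y) = min (v2 x) (v2 y)"
proof -
  have "v2 x \<noteq> v2 (- y)" "- y \<noteq> 0" using assms(1,3) by (simp_all add: v2_uminus)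
  from multiplicity_sum_min[OF this(1) assms(2) this(2)]
  show "v2 (x - y) = min (v2 x) (v2 y)" by (simp add: v2_uminus)
  show "v2 (x + y) = min (v2 x) (v2 y)"
    by (rule multiplicity_sum_min[OF assms])
qed

text \<open>If \<open>x = 2^a u\<close>, \<open>y = 2^a w\<close> with \<open>u, w\<close> odd, then \<open>(u + w)/2 + (u - w)/2 = u\<close> is odd,
  so exactly one of \<open>x + y\<close>, \<open>x - y\<close> has valuation \<open>a + 1\<close> and the other a larger one.\<close>
lemma v2_add_diff_equal:
  assumes "v2 x = v2 y" "x \<noteq> 0" "y \<noteq> 0" "x + y \<noteq> 0" "x - y \<noteq> 0"
  shows "min (v2 (x + y)) (v2 (x - y)) = v2 x + 1 \<and> max (v2 (x + y)) (v2 (x - y)) \<ge> v2 x + 2"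
proof -
  define a where "a = v2 x"
  obtain u w where u: "odd u" "x = 2 ^ a * u" and w: "odd w" "y = 2 ^ a * w"
    using v2_decompose assms(1-3) a_def by metis
  obtain s where s: "u + w = 2 * s" using u w by (metis evenE odd_add)
  obtain t where t: "u - w = 2 * t" using u w by (metis evenE odd_add even_diff)
  have "x + y = 2 ^ a * (u + w)" "x - y = 2 ^ a * (u - w)"
    using u w by (simp_all add: algebra_simps)
  then have sum: "x + y = 2 ^ (a + 1) * s" and diff: "x - y = 2 ^ (a + 1) * t"
    using s t by simp_all
  have "s \<noteq> 0" "t \<noteq> 0" using sum diff assms by auto
  then have vs: "v2 (x + y) = a + 1 + v2 s" and vt: "v2 (x - y) = a + 1 + v2 t"
    using v2_mult_pow2[of s "a + 1"] v2_mult_pow2[of t "a + 1"] sum diff by simp_all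
  have "s + t = u" using s t by linarith
  then consider "odd s" "even t" | "even s" "odd t" using u(1) by auto
  then show ?thesis
  proof cases
    case 1
    then have "v2 s = 0" "v2 t > 0" using \<open>t \<noteq> 0\<close>
      by (simp_all add: not_dvd_imp_multiplicity_0 multiplicity_gt_zero_iff)
    then show ?thesis using vs vt a_def by simp
  next
    case 2
    then have "v2 t = 0" "v2 s > 0" using \<open>s \<noteq> 0\<close>
      by (simp_all add: not_dvd_imp_multiplicity_0 multiplicity_gt_zero_iff)
    then show ?thesis using vs vt a_def by simp
  qed
qed

text \<open>The constraints satisfied by the valuations \<open>a, b, c, d\<close> of \<open>x, y, x + y, x - y\<close>.\<close>
definition valuation_pattern :: "nat \<Rightarrow> nat \<Rightarrow> nat \<Rightarrow> nat \<Rightarrow> bool" where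
  "valuation_pattern a b c d \<longleftrightarrow>
     (if a = b then min c d = a + 1 \<and> max c d \<ge> a + 2 else c = min a b \<and> d = min a b)"

lemma valuation_pattern_v2:
  assumes "x \<noteq> 0" "y \<noteq> 0" "x + y \<noteq> 0" "x - y \<noteq> 0"
  shows "valuation_pattern (v2 x) (v2 y) (v2 (x + y)) (v2 (x - y))"
  using v2_add_diff_unequal[OF _ assms(1,2)] v2_add_diff_equal[OF _ assms]
  unfolding valuation_pattern_def by auto

definition upair :: "nat \<Rightarrow> nat \<Rightarrow> nat \<times> nat" where
  "upair a b = (min a b, max a b)"

text \<open>A pattern is encoded by a pair of positive numbers: for \<open>a \<noteq> b\<close> the code \<open>(min + 1, max)\<close>
  has first entry at most the second; for \<open>a = b\<close> the code \<open>(max c d, a + 1)\<close> has first entry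
  larger.\<close>
definition vcode :: "nat \<Rightarrow> nat \<Rightarrow> nat \<Rightarrow> nat \<Rightarrow> nat \<times> nat" where
  "vcode a b c d = (if a = b then (max c d, a + 1) else (min a b + 1, max a b))"

definition vdecode :: "nat \<times> nat \<Rightarrow> (nat \<times> nat) \<times> (nat \<times> nat)" where
  "vdecode = (\<lambda>(x, y). if x \<le> y then ((x - 1, y), (x - 1, x - 1)) else ((y - 1, y - 1), (y, x)))"

lemma vdecode_vcode:
  assumes "valuation_pattern a b c d"
  shows "vdecode (vcode a b c d) = (upair a b, upair c d)"
  using assms unfolding valuation_pattern_def vdecode_def vcode_def upair_def
  by (auto split: if_splits)

lemma vcode_range:
  assumes "valuation_pattern a b c d" "a < m" "b < m" "c < m" "d < m"
  shows "vcode a b c d \<in> {1..m - 1} \<times> {1..m - 1}"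
  using assms unfolding valuation_pattern_def vcode_def by (auto split: if_splits)

definition vkey :: "int \<Rightarrow> int \<Rightarrow> (nat \<times> nat) \<times> (nat \<times> nat)" where
  "vkey q1 q2 = (upair (v2 q1) (v2 q2), upair (v2 (q1 + q2)) (v2 (q1 - q2)))"

lemma vkey_range:
  assumes "\<not> (2::int) ^ m dvd q1" "\<not> (2::int) ^ m dvd q2"
    "\<not> (2::int) ^ m dvd (q1 + q2)" "\<not> (2::int) ^ m dvd (q1 - q2)"
  shows "vkey q1 q2 \<in> vdecode ` ({1..m - 1} \<times> {1..m - 1})"
proof -
  have "q1 \<noteq> 0" "q2 \<noteq> 0" "q1 + q2 \<noteq> 0" "q1 - q2 \<noteq> 0" using assms by auto
  then have pattern: "valuation_pattern (v2 q1) (v2 q2) (v2 (q1 + q2)) (v2 (q1 - q2))"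
    by (rule valuation_pattern_v2)
  then have "vkey q1 q2 = vdecode (vcode (v2 q1) (v2 q2) (v2 (q1 + q2)) (v2 (q1 - q2)))"
    by (simp add: vdecode_vcode vkey_def)
  moreover have "vcode (v2 q1) (v2 q2) (v2 (q1 + q2)) (v2 (q1 - q2)) \<in> {1..m - 1} \<times> {1..m - 1}"
    using vcode_range[OF pattern] v2_less_of_not_dvd assms by blast
  ultimately show ?thesis by (rule image_eqI)
qed

lemma gam_nonzero: "gam q \<noteq> 0"
  by (simp add: gam_def)

lemma gam_power_order: assumes "q > 0" shows "gam q ^ q = 1"
proof -
  have "gam q ^ q = exp (of_nat q * (2 * of_real pi * \<i> / of_nat q))"
    unfolding gam_def by (rule exp_of_nat_mult[symmetric])
  also have "\<dots> = 1" using assms by simp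
  finally show ?thesis .
qed

lemma gam_powi_mod: assumes "q > 0" shows "gam q powi (a mod int q) = gam q powi a"
proof -
  have "a = a mod int q + int q * (a div int q)" by simp
  then have "gam q powi a = gam q powi (a mod int q) * (gam q powi int q) powi (a div int q)"
    using gam_nonzero by (metis power_int_add power_int_mult)
  then show ?thesis using gam_power_order[OF assms] by (simp add: power_int_of_nat)
qed

definition root_sum :: "nat \<Rightarrow> nat set \<Rightarrow> int \<Rightarrow> complex" where
  "root_sum q S n = (\<Sum>l\<in>S. gam q powi (n * int l))"

definition unit_stable :: "nat \<Rightarrow> nat set \<Rightarrow> bool" where
  "unit_stable q S \<longleftrightarrow> S \<subseteq> {..<q} \<and>
     (\<forall>u l. coprime u (int q) \<longrightarrow> l \<in> S \<longrightarrow> nat ((u * int l) mod int q) \<in> S)"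

text \<open>Multiplication by a unit \<open>u\<close> permutes a stable set \<open>S\<close>, so replacing \<open>n\<close> by \<open>n u\<close>
  leaves the root sum unchanged.\<close>
lemma root_sum_mult_unit:
  assumes "q > 0" "unit_stable q S" "coprime u (int q)"
  shows "root_sum q S (n * u) = root_sum q S n"
proof -
  define \<sigma> where "\<sigma> l = nat ((u * int l) mod int q)" for l
  have S: "S \<subseteq> {..<q}" "\<sigma> ` S \<subseteq> S"
    using assms(2,3) unfolding unit_stable_def \<sigma>_def by auto
  have int_\<sigma>: "int (\<sigma> l) = (u * int l) mod int q" for l
    using assms(1) unfolding \<sigma>_def by simp
  have "inj_on \<sigma> S"
  proof (rule inj_onI)
    fix l l' assume "l \<in> S" "l' \<in> S" "\<sigma> l = \<sigma> l'"
    then have "[u * int l = u * int l'] (mod int q)" and "l < q" "l' < q"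
      using S(1) int_\<sigma>[of l] int_\<sigma>[of l'] unfolding cong_def by auto
    then have "[int l = int l'] (mod int q)"
      using cong_mult_lcancel assms(3) coprime_commute by blast
    then show "l = l'"
      using cong_less_imp_eq_int[of "int l" "int q" "int l'"] \<open>l < q\<close> \<open>l' < q\<close> by simp
  qed
  then have perm: "\<sigma> ` S = S"
    using endo_inj_surj[OF finite_subset[OF S(1)] S(2)] by blast
  have "root_sum q S n = (\<Sum>l\<in>S. gam q powi (n * int (\<sigma> l)))"
    unfolding root_sum_def
    using sum.reindex[OF \<open>inj_on \<sigma> S\<close>, of "\<lambda>l. gam q powi (n * int l)"] perm by simp
  also have "\<dots> = root_sum q S (n * u)"
    unfolding root_sum_def int_\<sigma>
  proof (rule sum.cong)
    fix l
    have "gam q powi (n * ((u * int l) mod int q)) = gam q powi ((n * ((u * int l) mod int q)) mod int q)"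
      using gam_powi_mod[OF assms(1)] by simp
    also have "\<dots> = gam q powi ((n * u * int l) mod int q)"
      by (simp add: mod_mult_right_eq mult.assoc)
    finally show "gam q powi (n * ((u * int l) mod int q)) = gam q powi (n * u * int l)"
      using gam_powi_mod[OF assms(1)] by simp
  qed simp
  finally show ?thesis ..
qed

lemma root_sum_uminus:
  assumes "q > 0" "unit_stable q S"
  shows "root_sum q S (- n) = root_sum q S n"
  using root_sum_mult_unit[OF assms, of "- 1" n] by simp

text \<open>For \<open>q = 2^m\<close> the odd part of \<open>n\<close> is a unit, so the root sum depends only on \<open>v2 n\<close>.\<close>
lemma root_sum_v2:
  assumes "m > 0" "unit_stable (2 ^ m) S" "n \<noteq> 0"
  shows "root_sum (2 ^ m) S n = root_sum (2 ^ m) S (2 ^ v2 n)"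
proof -
  obtain u where u: "odd u" "n = 2 ^ v2 n * u" using v2_decompose assms(3) by blast
  then have "coprime u (int (2 ^ m))" by simp
  then show ?thesis using root_sum_mult_unit[OF _ assms(2), of u "2 ^ v2 n"] u(2) by simp
qed

lemma coprime_even_imp_odd:
  fixes u :: int assumes "coprime u (int q)" "even q" shows "odd u"
  using assms coprime_common_divisor[of 2 u "int q"] by auto

lemma unit_stable_oddRes: assumes "even q" shows "unit_stable q (oddRes q)"
  unfolding unit_stable_def
proof (intro conjI allI impI)
  show "oddRes q \<subseteq> {..<q}" unfolding oddRes_def by auto
  fix u l assume "coprime u (int q)" "l \<in> oddRes q"
  define r where "r = (u * int l) mod int q"
  have "odd u" "odd l" "l < q"
    using \<open>coprime u (int q)\<close> \<open>l \<in> oddRes q\<close> assms coprime_even_imp_odd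
    unfolding oddRes_def by auto
  moreover have "(2::int) dvd int q" using assms by simp
  ultimately have "odd r" "0 \<le> r" "r < int q"
    unfolding r_def by (auto simp: dvd_mod_iff)
  moreover from \<open>odd r\<close> have "r \<noteq> 0" by auto
  ultimately show "nat ((u * int l) mod int q) \<in> oddRes q"
    unfolding oddRes_def r_def[symmetric] by (auto simp: even_nat_iff)
qed

lemma nat_dvd_iff_int_dvd: assumes "0 \<le> r" shows "k dvd nat r \<longleftrightarrow> int k dvd r"
  using assms by (metis int_nat_eq of_nat_dvd_iff)

text \<open>Multiplying by an odd number preserves the exact power of two dividing a residue, so
  each \<open>B_j\<close> with \<open>2^(j+1)\<close> dividing \<open>q\<close> is stable.\<close>
lemma unit_stable_Bset: assumes "2 ^ (j + 1) dvd q" shows "unit_stable q (Bset q j)"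
  unfolding unit_stable_def
proof (intro conjI allI impI)
  show "Bset q j \<subseteq> {..<q}" unfolding Bset_def by auto
  fix u l assume cu: "coprime u (int q)" and "l \<in> Bset q j"
  define r where "r = (u * int l) mod int q"
  have "2 ^ j dvd q" using assms dvd_trans[OF le_imp_power_dvd[of j "j + 1" 2]] by simp
  then have "int (2 ^ j) dvd int q" "int (2 ^ (j + 1)) dvd int q"
    using assms by (simp_all only: of_nat_dvd_iff)
  then have dvd: "(2::int) ^ j dvd int q" "(2::int) ^ (j + 1) dvd int q" by simp_all
  have cop: "coprime (2 ^ (j + 1)) u"
    using coprime_divisors[OF dvd_refl dvd(2) cu] by (simp add: coprime_commute)
  have "l < q" and l: "int (2 ^ j) dvd int l" "\<not> int (2 ^ (j + 1)) dvd int l"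
    using \<open>l \<in> Bset q j\<close> unfolding Bset_def of_nat_dvd_iff by auto
  have "(2::int) ^ j dvd r"
    unfolding r_def using dvd(1) l(1) by (simp add: dvd_mod_iff)
  moreover have "\<not> (2::int) ^ (j + 1) dvd r"
    unfolding r_def using dvd(2) l(2) cop by (simp add: dvd_mod_iff coprime_dvd_mult_right_iff)
  moreover have "0 \<le> r" "r < int q" "r \<noteq> 0"
    using \<open>l < q\<close> calculation(2) unfolding r_def by auto
  ultimately show "nat ((u * int l) mod int q) \<in> Bset q j"
    unfolding Bset_def r_def[symmetric] by (auto simp add: nat_dvd_iff_int_dvd)
qed

text \<open>The polynomials \<open>(z\<^sup>2 + 1)\<^sup>2\<close>, \<open>-z (z\<^sup>2 + 1)\<close> and \<open>z\<^sup>2\<close>.\<close>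
definition Q0 :: "complex poly" where "Q0 = [:1, 0, 2, 0, 1:]"
definition Q1 :: "complex poly" where "Q1 = [:0, -1, 0, -1:]"
definition Q2 :: "complex poly" where "Q2 = [:0, 0, 1:]"

lemma reciprocal_quartic_expand:
  fixes x y :: complex assumes "x \<noteq> 0" "y \<noteq> 0"
  shows "([:- x, 1:] * [:- inverse x, 1:]) * ([:- y, 1:] * [:- inverse y, 1:]) =
    Q0 + smult (x + inverse x + y + inverse y) Q1
       + smult (x * y + inverse x * inverse y + x * inverse y + inverse x * y) Q2"
proof -
  have "[:- x, 1:] * [:- inverse x, 1:] = [:1, - (x + inverse x), 1:]"
    using assms(1) by (simp add: algebra_simps)
  moreover have "[:- y, 1:] * [:- inverse y, 1:] = [:1, - (y + inverse y), 1:]"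
    using assms(2) by (simp add: algebra_simps)
  ultimately show ?thesis unfolding Q0_def Q1_def Q2_def by (simp add: algebra_simps)
qed

text \<open>Applied to \<open>x = gam q ^ (q1 l)\<close>, \<open>y = gam q ^ (q2 l)\<close>, whose products are powers at
  \<open>\<plusminus>(q1 + q2) l\<close> and \<open>\<plusminus>(q1 - q2) l\<close>.\<close>
lemma factorPoly_expand:
  "factorPoly q q1 q2 l = Q0
     + smult (gam q powi (q1 * int l) + gam q powi (- q1 * int l)
              + gam q powi (q2 * int l) + gam q powi (- q2 * int l)) Q1
     + smult (gam q powi ((q1 + q2) * int l) + gam q powi (- (q1 + q2) * int l)
              + gam q powi ((q1 - q2) * int l) + gam q powi (- (q1 - q2) * int l)) Q2"
proof -
  define x where "x = gam q powi (q1 * int l)"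
  define y where "y = gam q powi (q2 * int l)"
  have "x \<noteq> 0" "y \<noteq> 0" unfolding x_def y_def using gam_nonzero by auto
  have pow: "gam q powi (a * int l) = (gam q powi int l) powi a" for a
    by (metis mult.commute power_int_mult)
  have "gam q powi (- q1 * int l) = inverse x" "gam q powi (- q2 * int l) = inverse y"
    "gam q powi ((q1 + q2) * int l) = x * y" "gam q powi ((q1 - q2) * int l) = x * inverse y"
    "gam q powi (- (q1 - q2) * int l) = inverse x * y"
    "gam q powi (- (q1 + q2) * int l) = inverse x * inverse y"
    unfolding x_def y_def pow using gam_nonzero
    by (simp_all add: power_int_add power_int_diff power_int_minus field_simps)
  then show ?thesis
    using reciprocal_quartic_expand[OF \<open>x \<noteq> 0\<close> \<open>y \<noteq> 0\<close>]
    unfolding factorPoly_def x_def y_def by simp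
qed

lemma sum_factorPoly:
  "(\<Sum>l\<in>S. factorPoly q q1 q2 l) = smult (of_nat (card S)) Q0
     + smult (root_sum q S q1 + root_sum q S (- q1) + root_sum q S q2 + root_sum q S (- q2)) Q1
     + smult (root_sum q S (q1 + q2) + root_sum q S (- (q1 + q2))
              + root_sum q S (q1 - q2) + root_sum q S (- (q1 - q2))) Q2"
  unfolding factorPoly_expand root_sum_def
  by (simp add: sum.distrib smult_sum[symmetric] smult_add_left of_nat_poly)

text \<open>The common value of all the sums over \<open>S\<close> with a given valuation key.\<close>
definition key_poly :: "nat \<Rightarrow> nat set \<Rightarrow> (nat \<times> nat) \<times> (nat \<times> nat) \<Rightarrow> complex poly" where
  "key_poly m S = (\<lambda>((a, b), (c, d)). smult (of_nat (card S)) Q0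
     + smult (2 * (root_sum (2 ^ m) S (2 ^ a) + root_sum (2 ^ m) S (2 ^ b))) Q1
     + smult (2 * (root_sum (2 ^ m) S (2 ^ c) + root_sum (2 ^ m) S (2 ^ d))) Q2)"

lemma add_upair:
  fixes f :: "nat \<Rightarrow> 'a::ab_semigroup_add"
  shows "f a + f b = f (fst (upair a b)) + f (snd (upair a b))"
  unfolding upair_def by (cases "a \<le> b") (simp_all add: add.commute)

lemma sum_factorPoly_vkey:
  assumes "m > 0" "unit_stable (2 ^ m) S" "q1 \<noteq> 0" "q2 \<noteq> 0" "q1 + q2 \<noteq> 0" "q1 - q2 \<noteq> 0"
  shows "(\<Sum>l\<in>S. factorPoly (2 ^ m) q1 q2 l) = key_poly m S (vkey q1 q2)"
proof -
  let ?\<rho> = "root_sum (2 ^ m) S"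
  have sign: "?\<rho> (- n) = ?\<rho> n" for n
    using root_sum_uminus[OF _ assms(2)] by simp
  have val: "?\<rho> n = ?\<rho> (2 ^ v2 n)" if "n \<noteq> 0" for n
    using root_sum_v2[OF assms(1,2) that] .
  have pair: "?\<rho> x + ?\<rho> (- x) + ?\<rho> y + ?\<rho> (- y) =
      2 * (?\<rho> (2 ^ fst (upair (v2 x) (v2 y))) + ?\<rho> (2 ^ snd (upair (v2 x) (v2 y))))"
    if "x \<noteq> 0" "y \<noteq> 0" for x y
  proof -
    have "?\<rho> x + ?\<rho> (- x) + ?\<rho> y + ?\<rho> (- y) = 2 * (?\<rho> (2 ^ v2 x) + ?\<rho> (2 ^ v2 y))"
      unfolding sign val[OF that(1)] val[OF that(2)] by simp
    also have "\<dots> = 2 * (?\<rho> (2 ^ fst (upair (v2 x) (v2 y))) + ?\<rho> (2 ^ snd (upair (v2 x) (v2 y))))"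
      using add_upair[of "\<lambda>a. ?\<rho> (2 ^ a)"] by simp
    finally show ?thesis .
  qed
  show ?thesis
    unfolding sum_factorPoly pair[OF assms(3,4)] pair[OF assms(5,6)] vkey_def key_poly_def
    by (simp add: split_beta)
qed

lemma tau_vkey:
  assumes "m > 0" "q1 \<noteq> 0" "q2 \<noteq> 0" "q1 + q2 \<noteq> 0" "q1 - q2 \<noteq> 0"
  shows "tau m q1 q2 = key_poly m (oddRes (2 ^ m)) (vkey q1 q2)
           # map (\<lambda>j. key_poly m (Bset (2 ^ m) j) (vkey q1 q2)) [1..<m]"
proof -
  have "unit_stable (2 ^ m) (oddRes (2 ^ m))"
    using assms(1) by (intro unit_stable_oddRes) simp
  moreover have "unit_stable (2 ^ m) (Bset (2 ^ m) j)" if "j < m" for j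
    using that by (intro unit_stable_Bset le_imp_power_dvd) simp
  ultimately show ?thesis
    unfolding tau_def psiPoly_def alphaPoly_def
    using sum_factorPoly_vkey[OF assms(1) _ assms(2-5)] by simp
qed

lemma card_image_le_through:
  assumes "finite (h ` A)" "\<And>x y. x \<in> A \<Longrightarrow> y \<in> A \<Longrightarrow> h x = h y \<Longrightarrow> f x = f y"
  shows "finite (f ` A) \<and> card (f ` A) \<le> card (h ` A)"
proof -
  have "f ` A = (\<lambda>k. f (inv_into A h k)) ` (h ` A)"
    unfolding image_image
  proof (rule image_cong[OF refl])
    fix x assume "x \<in> A"
    then have "h x \<in> h ` A" by simp
    show "f x = f (inv_into A h (h x))"
      using assms(2)[OF \<open>x \<in> A\<close> inv_into_into[OF \<open>h x \<in> h ` A\<close>]]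
        f_inv_into_f[OF \<open>h x \<in> h ` A\<close>] by simp
  qed
  then show ?thesis using assms(1) card_image_le by simp
qed

theorem proposition3p1p4:
  fixes m :: nat
  assumes "m \<ge> 3"
  defines "q \<equiv> (2::int) ^ m"
  shows "finite ((\<lambda>(q1, q2). tau m q1 q2) `
            {(q1::int, q2::int). \<not> q dvd q1 \<and> \<not> q dvd q2 \<and>
                                    \<not> q dvd (q1 + q2) \<and> \<not> q dvd (q1 - q2)})
       \<and> card ((\<lambda>(q1, q2). tau m q1 q2) `
            {(q1::int, q2::int). \<not> q dvd q1 \<and> \<not> q dvd q2 \<and>
                                    \<not> q dvd (q1 + q2) \<and> \<not> q dvd (q1 - q2)}) \<le> (m - 1)^2"
proof -
  define D where "D = {(q1::int, q2::int). \<not> q dvd q1 \<and> \<not> q dvd q2 \<and>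
                                    \<not> q dvd (q1 + q2) \<and> \<not> q dvd (q1 - q2)}"
  define R where "R = {1..m - 1} \<times> {1..m - 1}"
  have keys: "case_prod vkey ` D \<subseteq> vdecode ` R"
  proof
    fix k assume "k \<in> case_prod vkey ` D"
    then obtain q1 q2 where "(q1, q2) \<in> D" "k = vkey q1 q2" by auto
    then show "k \<in> vdecode ` R" using vkey_range[of m q1 q2] unfolding D_def R_def q_def by simp
  qed
  have nonzero: "q1 \<noteq> 0 \<and> q2 \<noteq> 0 \<and> q1 + q2 \<noteq> 0 \<and> q1 - q2 \<noteq> 0" if "(q1, q2) \<in> D" for q1 q2
    using that unfolding D_def by auto
  have "tau m q1 q2 = tau m p1 p2"
    if "(q1, q2) \<in> D" "(p1, p2) \<in> D" "vkey q1 q2 = vkey p1 p2" for q1 q2 p1 p2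
    using tau_vkey[of m q1 q2] tau_vkey[of m p1 p2] nonzero[OF that(1)] nonzero[OF that(2)]
      that(3) assms(1) by simp
  moreover have "finite (case_prod vkey ` D)"
    by (rule finite_subset[OF keys]) (simp add: R_def)
  ultimately have taus: "finite (case_prod (tau m) ` D) \<and>
      card (case_prod (tau m) ` D) \<le> card (case_prod vkey ` D)"
    by (intro card_image_le_through) auto
  have "card (case_prod vkey ` D) \<le> card (vdecode ` R)"
    using keys unfolding R_def by (intro card_mono) simp_all
  also have "\<dots> \<le> card R" unfolding R_def by (intro card_image_le) simp
  also have "\<dots> = (m - 1) ^ 2" unfolding R_def by (simp add: power2_eq_square)
  finally show ?thesis using taus unfolding D_def by simp
qed

end
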